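(* Let $M$ and $N$ be objects of an abelian category $\mathcal{A}$, let $M'$ be a direct summand of $M$ and $N'$ a direct summand of $N$. (1) If $N$ is strongly $M$-Rickart, then $N'$ is strongly $M'$-Rickart. (2) If $N$ is dual strongly $M$-Rickart, then $N'$ is dual strongly $M'$-Rickart.
   Context: A morphism $f:X\to Y$ is a section if $f'f=1_X$ for some $f'$, a retraction if $ff'=1_Y$ for some $f'$. A monomorphism $k:K\to X$ is fully invariant if for every $h:X\to X$ there is $\alpha:K\to K$ with $hk=k\alpha$; an epimorphism $c:X\to C$ is fully coinvariant if for every $h:X\to X$ there is $\gamma:C\to C$ with $ch=\gamma c$. For objects $M,N$: $N$ is strongly $M$-Rickart if the kernel of every morphism $f:M\to N$ is a fully invariant section; $N$ is dual strongly $M$-Rickart if the cokernel of every morphism $f:M\to N$ is a fully coinvariant retraction. *)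

theory Defs
  imports Main
begin

text \<open>A (small-or-large) category presented by an object set, an arrow set,
source/target maps, composition (cmp g f = g after f) and identities,
together with a preadditive structure on each hom-set.\<close>

record ('o, 'm) acat =
  Obj :: "'o set"
  Arr :: "'m set"
  src :: "'m \<Rightarrow> 'o"
  tgt :: "'m \<Rightarrow> 'o"
  cmp :: "'m \<Rightarrow> 'm \<Rightarrow> 'm"
  idm :: "'o \<Rightarrow> 'm"
  pls :: "'m \<Rightarrow> 'm \<Rightarrow> 'm"
  zro :: "'o \<Rightarrow> 'o \<Rightarrow> 'm"
  ngt :: "'m \<Rightarrow> 'm"

definition hom :: "('o, 'm) acat \<Rightarrow> 'o \<Rightarrow> 'o \<Rightarrow> 'm set" where
  "hom C a b = {f \<in> Arr C. src C f = a \<and> tgt C f = b}"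

definition category :: "('o, 'm) acat \<Rightarrow> bool" where
  "category C \<longleftrightarrow>
     (\<forall>f \<in> Arr C. src C f \<in> Obj C \<and> tgt C f \<in> Obj C) \<and>
     (\<forall>a \<in> Obj C. idm C a \<in> hom C a a) \<and>
     (\<forall>a \<in> Obj C. \<forall>b \<in> Obj C. \<forall>c \<in> Obj C. \<forall>f \<in> hom C a b. \<forall>g \<in> hom C b c.
        cmp C g f \<in> hom C a c) \<and>
     (\<forall>a \<in> Obj C. \<forall>b \<in> Obj C. \<forall>c \<in> Obj C. \<forall>d \<in> Obj C.
        \<forall>f \<in> hom C a b. \<forall>g \<in> hom C b c. \<forall>h \<in> hom C c d.
        cmp C h (cmp C g f) = cmp C (cmp C h g) f) \<and>
     (\<forall>a \<in> Obj C. \<forall>b \<in> Obj C. \<forall>f \<in> hom C a b.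
        cmp C f (idm C a) = f \<and> cmp C (idm C b) f = f)"

definition preadditive :: "('o, 'm) acat \<Rightarrow> bool" where
  "preadditive C \<longleftrightarrow> category C \<and>
     (\<forall>a \<in> Obj C. \<forall>b \<in> Obj C.
        zro C a b \<in> hom C a b \<and>
        (\<forall>f \<in> hom C a b. \<forall>g \<in> hom C a b. pls C f g \<in> hom C a b) \<and>
        (\<forall>f \<in> hom C a b. ngt C f \<in> hom C a b) \<and>
        (\<forall>f \<in> hom C a b. \<forall>g \<in> hom C a b. \<forall>h \<in> hom C a b.
           pls C (pls C f g) h = pls C f (pls C g h)) \<and>
        (\<forall>f \<in> hom C a b. \<forall>g \<in> hom C a b. pls C f g = pls C g f) \<and>
        (\<forall>f \<in> hom C a b. pls C f (zro C a b) = f) \<and>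
        (\<forall>f \<in> hom C a b. pls C f (ngt C f) = zro C a b)) \<and>
     (\<forall>a \<in> Obj C. \<forall>b \<in> Obj C. \<forall>c \<in> Obj C.
        \<forall>f \<in> hom C a b. \<forall>g \<in> hom C a b. \<forall>h \<in> hom C b c.
          cmp C h (pls C f g) = pls C (cmp C h f) (cmp C h g)) \<and>
     (\<forall>a \<in> Obj C. \<forall>b \<in> Obj C. \<forall>c \<in> Obj C.
        \<forall>f \<in> hom C a b. \<forall>g \<in> hom C b c. \<forall>h \<in> hom C b c.
          cmp C (pls C g h) f = pls C (cmp C g f) (cmp C h f))"

definition mono :: "('o, 'm) acat \<Rightarrow> 'm \<Rightarrow> bool" where
  "mono C f \<longleftrightarrow> f \<in> Arr C \<and>
     (\<forall>x \<in> Obj C. \<forall>g \<in> hom C x (src C f). \<forall>h \<in> hom C x (src C f).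
        cmp C f g = cmp C f h \<longrightarrow> g = h)"

definition epi :: "('o, 'm) acat \<Rightarrow> 'm \<Rightarrow> bool" where
  "epi C f \<longleftrightarrow> f \<in> Arr C \<and>
     (\<forall>x \<in> Obj C. \<forall>g \<in> hom C (tgt C f) x. \<forall>h \<in> hom C (tgt C f) x.
        cmp C g f = cmp C h f \<longrightarrow> g = h)"

definition is_kernel :: "('o, 'm) acat \<Rightarrow> 'm \<Rightarrow> 'm \<Rightarrow> bool" where
  "is_kernel C f k \<longleftrightarrow> f \<in> Arr C \<and> k \<in> Arr C \<and> tgt C k = src C f \<and>
     cmp C f k = zro C (src C k) (tgt C f) \<and>
     (\<forall>x \<in> Obj C. \<forall>g \<in> hom C x (src C f). cmp C f g = zro C x (tgt C f) \<longrightarrow>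
        (\<exists>!u. u \<in> hom C x (src C k) \<and> cmp C k u = g))"

definition is_cokernel :: "('o, 'm) acat \<Rightarrow> 'm \<Rightarrow> 'm \<Rightarrow> bool" where
  "is_cokernel C f c \<longleftrightarrow> f \<in> Arr C \<and> c \<in> Arr C \<and> src C c = tgt C f \<and>
     cmp C c f = zro C (src C f) (tgt C c) \<and>
     (\<forall>x \<in> Obj C. \<forall>g \<in> hom C (tgt C f) x. cmp C g f = zro C (src C f) x \<longrightarrow>
        (\<exists>!u. u \<in> hom C (tgt C c) x \<and> cmp C u c = g))"

definition is_zero_object :: "('o, 'm) acat \<Rightarrow> 'o \<Rightarrow> bool" where
  "is_zero_object C z \<longleftrightarrow> z \<in> Obj C \<and>
     (\<forall>a \<in> Obj C. (\<exists>!f. f \<in> hom C z a) \<and> (\<exists>!f. f \<in> hom C a z))"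

definition is_product :: "('o, 'm) acat \<Rightarrow> 'o \<Rightarrow> 'o \<Rightarrow> 'o \<Rightarrow> 'm \<Rightarrow> 'm \<Rightarrow> bool" where
  "is_product C a b p p1 p2 \<longleftrightarrow> p \<in> Obj C \<and> p1 \<in> hom C p a \<and> p2 \<in> hom C p b \<and>
     (\<forall>x \<in> Obj C. \<forall>f \<in> hom C x a. \<forall>g \<in> hom C x b.
        (\<exists>!u. u \<in> hom C x p \<and> cmp C p1 u = f \<and> cmp C p2 u = g))"

definition abelian :: "('o, 'm) acat \<Rightarrow> bool" where
  "abelian C \<longleftrightarrow> preadditive C \<and>
     (\<exists>z. is_zero_object C z) \<and>
     (\<forall>a \<in> Obj C. \<forall>b \<in> Obj C. \<exists>p p1 p2. is_product C a b p p1 p2) \<and>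
     (\<forall>f \<in> Arr C. \<exists>k. is_kernel C f k) \<and>
     (\<forall>f \<in> Arr C. \<exists>c. is_cokernel C f c) \<and>
     (\<forall>f. mono C f \<longrightarrow> (\<exists>g. is_kernel C g f)) \<and>
     (\<forall>f. epi C f \<longrightarrow> (\<exists>g. is_cokernel C g f))"

definition is_section :: "('o, 'm) acat \<Rightarrow> 'm \<Rightarrow> bool" where
  "is_section C f \<longleftrightarrow> f \<in> Arr C \<and>
     (\<exists>f' \<in> hom C (tgt C f) (src C f). cmp C f' f = idm C (src C f))"

definition is_retraction :: "('o, 'm) acat \<Rightarrow> 'm \<Rightarrow> bool" where
  "is_retraction C f \<longleftrightarrow> f \<in> Arr C \<and>
     (\<exists>f' \<in> hom C (tgt C f) (src C f). cmp C f f' = idm C (tgt C f))"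

definition fully_invariant :: "('o, 'm) acat \<Rightarrow> 'm \<Rightarrow> bool" where
  "fully_invariant C k \<longleftrightarrow> mono C k \<and>
     (\<forall>h \<in> hom C (tgt C k) (tgt C k). \<exists>\<alpha> \<in> hom C (src C k) (src C k).
        cmp C h k = cmp C k \<alpha>)"

definition fully_coinvariant :: "('o, 'm) acat \<Rightarrow> 'm \<Rightarrow> bool" where
  "fully_coinvariant C c \<longleftrightarrow> epi C c \<and>
     (\<forall>h \<in> hom C (src C c) (src C c). \<exists>\<gamma> \<in> hom C (tgt C c) (tgt C c).
        cmp C c h = cmp C \<gamma> c)"

definition strongly_rickart :: "('o, 'm) acat \<Rightarrow> 'o \<Rightarrow> 'o \<Rightarrow> bool" where
  "strongly_rickart C M N \<longleftrightarrow>
     (\<forall>f \<in> hom C M N. \<forall>k. is_kernel C f k \<longrightarrow> fully_invariant C k \<and> is_section C k)"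

definition dual_strongly_rickart :: "('o, 'm) acat \<Rightarrow> 'o \<Rightarrow> 'o \<Rightarrow> bool" where
  "dual_strongly_rickart C M N \<longleftrightarrow>
     (\<forall>f \<in> hom C M N. \<forall>c. is_cokernel C f c \<longrightarrow> fully_coinvariant C c \<and> is_retraction C c)"

definition direct_summand :: "('o, 'm) acat \<Rightarrow> 'o \<Rightarrow> 'o \<Rightarrow> bool" where
  "direct_summand C M' M \<longleftrightarrow> M' \<in> Obj C \<and> M \<in> Obj C \<and>
     (\<exists>M'' \<in> Obj C. \<exists>i1 \<in> hom C M' M. \<exists>i2 \<in> hom C M'' M.
        \<exists>p1 \<in> hom C M M'. \<exists>p2 \<in> hom C M M''.
          cmp C p1 i1 = idm C M' \<and> cmp C p2 i2 = idm C M'' \<and>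
          cmp C p2 i1 = zro C M' M'' \<and> cmp C p1 i2 = zro C M'' M' \<and>
          pls C (cmp C i1 p1) (cmp C i2 p2) = idm C M)"

end

(*
  Only the retract structure of the summands is used: with i, p exhibiting M' as a retract
  of M and j, q exhibiting N' as a retract of N, a morphism f : M' \<rightarrow> N' extends to
  g = j f p : M \<rightarrow> N. If k is a kernel of f and k' a kernel of g, then i k factors through k'
  and p k' through k, and the two factorisations compose to the identity on the domain of k.
  Hence a left inverse r of k' yields the left inverse v r i of k, and full invariance of k'
  under i h p yields full invariance of k under h. Part (2) is part (1) in the opposite
  category, where cokernels, epimorphisms and retractions become kernels, monomorphisms and
  sections; zero morphisms are all the argument needs from the additive structure.
*)
theory Submission
  imports Defs
begin

definition zero_morphisms :: "('o, 'm) acat \<Rightarrow> bool" where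
  "zero_morphisms C \<longleftrightarrow> category C \<and>
     (\<forall>a \<in> Obj C. \<forall>b \<in> Obj C. zro C a b \<in> hom C a b) \<and>
     (\<forall>a \<in> Obj C. \<forall>b \<in> Obj C. \<forall>c \<in> Obj C. \<forall>f \<in> hom C a b.
        cmp C (zro C b c) f = zro C a c \<and> cmp C f (zro C c a) = zro C c b)"

definition is_retract :: "('o, 'm) acat \<Rightarrow> 'o \<Rightarrow> 'o \<Rightarrow> bool" where
  "is_retract C A B \<longleftrightarrow> (\<exists>i \<in> hom C A B. \<exists>p \<in> hom C B A. cmp C p i = idm C A)"

lemma direct_summand_is_retract: "direct_summand C M' M \<Longrightarrow> is_retract C M' M"
  unfolding direct_summand_def is_retract_def by blast

lemma preadditive_zero_unique:
  assumes "preadditive C" "a \<in> Obj C" "b \<in> Obj C" "z \<in> hom C a b" "pls C z z = z"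
  shows "z = zro C a b"
proof -
  have "zro C a b = pls C z (ngt C z)" using assms unfolding preadditive_def by metis
  also have "\<dots> = pls C (pls C z z) (ngt C z)" using assms(5) by simp
  also have "\<dots> = pls C z (pls C z (ngt C z))" using assms unfolding preadditive_def by metis
  also have "\<dots> = z" using assms unfolding preadditive_def by metis
  finally show ?thesis by simp
qed

lemma preadditive_zero_morphisms:
  assumes pre: "preadditive C"
  shows "zero_morphisms C"
proof -
  have cat: "category C" using pre unfolding preadditive_def by blast
  have zero: "zro C a b \<in> hom C a b" "pls C (zro C a b) (zro C a b) = zro C a b"
    if "a \<in> Obj C" "b \<in> Obj C" for a b
    using pre that unfolding preadditive_def by blast+
  have comp: "cmp C g f \<in> hom C a c"
    if "a \<in> Obj C" "b \<in> Obj C" "c \<in> Obj C" "f \<in> hom C a b" "g \<in> hom C b c" for a b c f g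
    using cat that unfolding category_def by blast
  have "cmp C (zro C b c) f = zro C a c \<and> cmp C f (zro C c a) = zro C c b"
    if obj: "a \<in> Obj C" "b \<in> Obj C" "c \<in> Obj C" and f: "f \<in> hom C a b" for a b c f
  proof
    have "cmp C (zro C b c) f = pls C (cmp C (zro C b c) f) (cmp C (zro C b c) f)"
      using pre obj f zero[of b c] unfolding preadditive_def by metis
    then show "cmp C (zro C b c) f = zro C a c"
      using preadditive_zero_unique[OF pre obj(1,3)] comp obj f zero by metis
    have "cmp C f (zro C c a) = pls C (cmp C f (zro C c a)) (cmp C f (zro C c a))"
      using pre obj f zero[of c a] unfolding preadditive_def by metis
    then show "cmp C f (zro C c a) = zro C c b"
      using preadditive_zero_unique[OF pre obj(3,2)] comp obj f zero by metis
  qed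
  then show ?thesis using cat zero unfolding zero_morphisms_def by blast
qed

locale zero_morphism_category =
  fixes C :: "('o, 'm) acat"
  assumes zero_morphisms: "zero_morphisms C"
begin

lemma category: "category C"
  using zero_morphisms unfolding zero_morphisms_def by blast

lemma src_obj [simp]: "f \<in> Arr C \<Longrightarrow> src C f \<in> Obj C"
  and tgt_obj [simp]: "f \<in> Arr C \<Longrightarrow> tgt C f \<in> Obj C"
  using category unfolding category_def by blast+

lemma comp_in_hom:
  assumes "f \<in> Arr C" "g \<in> Arr C" "src C g = tgt C f"
  shows "cmp C g f \<in> hom C (src C f) (tgt C g)"
proof -
  have "f \<in> hom C (src C f) (tgt C f)" "g \<in> hom C (tgt C f) (tgt C g)"
    using assms by (auto simp: hom_def)
  moreover have "src C f \<in> Obj C" "tgt C f \<in> Obj C" "tgt C g \<in> Obj C" using assms by auto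
  ultimately show ?thesis using category unfolding category_def by blast
qed

lemma comp_arr [simp]: "f \<in> Arr C \<Longrightarrow> g \<in> Arr C \<Longrightarrow> src C g = tgt C f \<Longrightarrow> cmp C g f \<in> Arr C"
  and src_comp [simp]: "f \<in> Arr C \<Longrightarrow> g \<in> Arr C \<Longrightarrow> src C g = tgt C f \<Longrightarrow> src C (cmp C g f) = src C f"
  and tgt_comp [simp]: "f \<in> Arr C \<Longrightarrow> g \<in> Arr C \<Longrightarrow> src C g = tgt C f \<Longrightarrow> tgt C (cmp C g f) = tgt C g"
  using comp_in_hom unfolding hom_def by auto

lemma comp_assoc [simp]:
  assumes "f \<in> Arr C" "g \<in> Arr C" "h \<in> Arr C" "src C g = tgt C f" "src C h = tgt C g"
  shows "cmp C (cmp C h g) f = cmp C h (cmp C g f)"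
proof -
  have "f \<in> hom C (src C f) (tgt C f)" "g \<in> hom C (tgt C f) (tgt C g)" "h \<in> hom C (tgt C g) (tgt C h)"
    using assms by (auto simp: hom_def)
  moreover have "src C f \<in> Obj C" "tgt C f \<in> Obj C" "tgt C g \<in> Obj C" "tgt C h \<in> Obj C"
    using assms by auto
  ultimately show ?thesis using category unfolding category_def by metis
qed

lemma id_arr [simp]: "a \<in> Obj C \<Longrightarrow> idm C a \<in> Arr C"
  and src_id [simp]: "a \<in> Obj C \<Longrightarrow> src C (idm C a) = a"
  and tgt_id [simp]: "a \<in> Obj C \<Longrightarrow> tgt C (idm C a) = a"
  using category unfolding category_def hom_def by auto

lemma id_comp [simp]: "f \<in> Arr C \<Longrightarrow> a = tgt C f \<Longrightarrow> cmp C (idm C a) f = f"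
  and comp_id [simp]: "f \<in> Arr C \<Longrightarrow> a = src C f \<Longrightarrow> cmp C f (idm C a) = f"
  using category src_obj tgt_obj unfolding category_def hom_def by blast+

lemma zero_arr [simp]: "a \<in> Obj C \<Longrightarrow> b \<in> Obj C \<Longrightarrow> zro C a b \<in> Arr C"
  and src_zero [simp]: "a \<in> Obj C \<Longrightarrow> b \<in> Obj C \<Longrightarrow> src C (zro C a b) = a"
  and tgt_zero [simp]: "a \<in> Obj C \<Longrightarrow> b \<in> Obj C \<Longrightarrow> tgt C (zro C a b) = b"
  using zero_morphisms unfolding zero_morphisms_def hom_def by auto

lemma zero_comp [simp]: "f \<in> Arr C \<Longrightarrow> b = tgt C f \<Longrightarrow> c \<in> Obj C \<Longrightarrow> cmp C (zro C b c) f = zro C (src C f) c"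
  and comp_zero [simp]: "f \<in> Arr C \<Longrightarrow> b = src C f \<Longrightarrow> a \<in> Obj C \<Longrightarrow> cmp C f (zro C a b) = zro C a (tgt C f)"
  using zero_morphisms unfolding zero_morphisms_def hom_def by auto

(* Applies an equation g f = h inside the right-nested normal form that comp_assoc produces. *)
lemma comp_reassoc:
  assumes "cmp C g f = h" "f \<in> Arr C" "g \<in> Arr C" "X \<in> Arr C" "src C g = tgt C f" "tgt C X = src C f"
  shows "cmp C g (cmp C f X) = cmp C h X"
proof -
  have "cmp C (cmp C g f) X = cmp C g (cmp C f X)" using assms(2-) by simp
  then show ?thesis unfolding assms(1) by (rule sym)
qed

lemma kernelD:
  assumes "is_kernel C f k"
  shows "f \<in> Arr C" "k \<in> Arr C" "tgt C k = src C f" "cmp C f k = zro C (src C k) (tgt C f)"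
  using assms unfolding is_kernel_def by simp_all

lemma kernel_universal:
  assumes "is_kernel C f k" "x \<in> Obj C" "g \<in> hom C x (src C f)" "cmp C f g = zro C x (tgt C f)"
  shows "\<exists>!u. u \<in> hom C x (src C k) \<and> cmp C k u = g"
proof -
  have "\<forall>x \<in> Obj C. \<forall>g \<in> hom C x (src C f). cmp C f g = zro C x (tgt C f) \<longrightarrow>
      (\<exists>!u. u \<in> hom C x (src C k) \<and> cmp C k u = g)"
    using assms(1) unfolding is_kernel_def by (elim conjE)
  then show ?thesis using assms(2-4) by blast
qed

lemma kernel_mono:
  assumes ker: "is_kernel C f k"
  shows "mono C k"
  unfolding mono_def
proof (intro conjI ballI impI)
  note k = kernelD[OF ker]
  show "k \<in> Arr C" by (fact k(2))
  fix x a b assume x: "x \<in> Obj C" and ab: "a \<in> hom C x (src C k)" "b \<in> hom C x (src C k)"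
    and eq: "cmp C k a = cmp C k b"
  have ka: "cmp C k a \<in> hom C x (src C f)" using k ab by (simp add: hom_def)
  have "cmp C f (cmp C k a) = cmp C (zro C (src C k) (tgt C f)) a"
    using comp_reassoc[OF k(4)] k ab by (simp add: hom_def)
  also have "\<dots> = zro C x (tgt C f)" using k ab by (simp add: hom_def)
  finally have uniq: "\<exists>!u. u \<in> hom C x (src C k) \<and> cmp C k u = cmp C k a"
    by (rule kernel_universal[OF ker x ka])
  have "(THE u. u \<in> hom C x (src C k) \<and> cmp C k u = cmp C k a) = a"
    by (rule the1_equality[OF uniq]) (simp add: ab(1))
  moreover have "(THE u. u \<in> hom C x (src C k) \<and> cmp C k u = cmp C k a) = b"
    by (rule the1_equality[OF uniq]) (simp add: ab(2) eq)
  ultimately show "a = b" by simp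
qed

lemma kernel_lift:
  assumes "is_kernel C f k" "g \<in> Arr C" "tgt C g = src C f" "cmp C f g = zro C (src C g) (tgt C f)"
  obtains u where "u \<in> hom C (src C g) (src C k)" "cmp C k u = g"
proof -
  have "g \<in> hom C (src C g) (src C f)" using assms(2,3) by (simp add: hom_def)
  from kernel_universal[OF assms(1) _ this assms(4)] assms(2)
  have "\<exists>u. u \<in> hom C (src C g) (src C k) \<and> cmp C k u = g" by (simp add: ex1_implies_ex)
  then show ?thesis using that by blast
qed

lemma mono_cancel:
  assumes "mono C k" "a \<in> hom C x (src C k)" "b \<in> hom C x (src C k)" "cmp C k a = cmp C k b"
  shows "a = b"
proof -
  have "x \<in> Obj C" using assms(2) by (auto simp: hom_def)
  then show ?thesis using assms unfolding mono_def by blast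
qed

lemma kernel_comparison:
  assumes i: "i \<in> hom C M' M" and p: "p \<in> hom C M M'" and pi: "cmp C p i = idm C M'"
    and j: "j \<in> hom C N' N" and q: "q \<in> hom C N N'" and qj: "cmp C q j = idm C N'"
    and f: "f \<in> hom C M' N'" and ker: "is_kernel C f k"
    and ker': "is_kernel C (cmp C j (cmp C f p)) k'"
  obtains u v where "u \<in> hom C (src C k) (src C k')" "v \<in> hom C (src C k') (src C k)"
    "cmp C k' u = cmp C i k" "cmp C k v = cmp C p k'" "cmp C v u = idm C (src C k)"
proof -
  have arr: "i \<in> Arr C" "p \<in> Arr C" "j \<in> Arr C" "q \<in> Arr C" "f \<in> Arr C"
    "src C i = M'" "tgt C i = M" "src C p = M" "tgt C p = M'" "src C j = N'" "tgt C j = N"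
    "src C q = N" "tgt C q = N'" "src C f = M'" "tgt C f = N'"
    using i p j q f by (simp_all add: hom_def)
  note k = kernelD[OF ker] and k' = kernelD[OF ker']
  have obj: "M' \<in> Obj C" "N \<in> Obj C" "N' \<in> Obj C" using arr src_obj tgt_obj by metis+
  have pi_k: "cmp C p (cmp C i k) = k"
    using comp_reassoc[OF pi] arr k obj by simp
  have "cmp C (cmp C j (cmp C f p)) (cmp C i k) = cmp C j (cmp C f k)"
    using arr k pi_k by simp
  also have "\<dots> = zro C (src C (cmp C i k)) (tgt C (cmp C j (cmp C f p)))"
    using arr k obj by simp
  finally obtain u where u: "u \<in> hom C (src C k) (src C k')" "cmp C k' u = cmp C i k"
    using kernel_lift[OF ker'] arr k by (metis comp_arr src_comp tgt_comp)
  have "cmp C f (cmp C p k') = cmp C q (cmp C j (cmp C f (cmp C p k')))"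
    using comp_reassoc[OF qj] arr k'(2,3) obj by simp
  also have "\<dots> = zro C (src C (cmp C p k')) (tgt C f)"
    using arr k' obj by simp
  finally obtain v where v: "v \<in> hom C (src C k') (src C k)" "cmp C k v = cmp C p k'"
    using kernel_lift[OF ker] arr k' by (metis comp_arr src_comp tgt_comp)
  have "cmp C k (cmp C v u) = cmp C p (cmp C k' u)"
    using comp_reassoc[OF v(2)] u v k k' arr by (simp add: hom_def)
  also have "\<dots> = cmp C k (idm C (src C k))" using u(2) pi_k k by simp
  finally have "cmp C v u = idm C (src C k)"
    using mono_cancel[OF kernel_mono[OF ker]] u v k by (simp add: hom_def)
  with u v show ?thesis using that by blast
qed

lemma is_section_restrict:
  assumes sec: "is_section C k'" and k: "k \<in> Arr C" and i: "i \<in> Arr C"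
    and ik: "src C i = tgt C k" "tgt C i = tgt C k'"
    and u: "u \<in> hom C (src C k) (src C k')" and v: "v \<in> hom C (src C k') (src C k)"
    and comm: "cmp C k' u = cmp C i k" and vu: "cmp C v u = idm C (src C k)"
  shows "is_section C k"
proof -
  obtain r where r: "r \<in> hom C (tgt C k') (src C k')" "cmp C r k' = idm C (src C k')"
    using sec unfolding is_section_def by blast
  have k': "k' \<in> Arr C" using sec unfolding is_section_def by blast
  have "cmp C (cmp C v (cmp C r i)) k = cmp C v (cmp C r (cmp C k' u))"
    using k i ik r u v comm by (simp add: hom_def)
  also have "\<dots> = idm C (src C k)"
    using comp_reassoc[OF r(2)] k' r u v vu by (simp add: hom_def)
  finally have "cmp C (cmp C v (cmp C r i)) k = idm C (src C k)" .
  moreover have "cmp C v (cmp C r i) \<in> hom C (tgt C k) (src C k)"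
    using i ik r v by (simp add: hom_def)
  ultimately show ?thesis unfolding is_section_def using k by blast
qed

lemma fully_invariant_restrict:
  assumes inv: "fully_invariant C k'" and mono: "mono C k"
    and i: "i \<in> hom C A B" and p: "p \<in> hom C B A" and pi: "cmp C p i = idm C A"
    and tgt: "tgt C k = A" "tgt C k' = B"
    and u: "u \<in> hom C (src C k) (src C k')" and v: "v \<in> hom C (src C k') (src C k)"
    and ku: "cmp C k' u = cmp C i k" and kv: "cmp C k v = cmp C p k'"
  shows "fully_invariant C k"
  unfolding fully_invariant_def
proof (intro conjI ballI)
  show "mono C k" by (fact mono)
  fix h assume h: "h \<in> hom C (tgt C k) (tgt C k)"
  have k: "k \<in> Arr C" using mono unfolding mono_def by blast
  have k': "k' \<in> Arr C" using inv unfolding fully_invariant_def mono_def by blast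
  have arr: "i \<in> Arr C" "p \<in> Arr C" "h \<in> Arr C" "src C i = A" "tgt C i = B" "src C p = B"
    "tgt C p = A" "src C h = A" "tgt C h = A" "u \<in> Arr C" "v \<in> Arr C"
    "src C u = src C k" "tgt C u = src C k'" "src C v = src C k'" "tgt C v = src C k"
    using i p h u v tgt by (simp_all add: hom_def)
  have A: "A \<in> Obj C" using arr(1,4) src_obj by blast
  have "cmp C i (cmp C h p) \<in> hom C (tgt C k') (tgt C k')"
    using arr tgt by (simp add: hom_def)
  then obtain \<beta> where \<beta>: "\<beta> \<in> hom C (src C k') (src C k')"
    "cmp C (cmp C i (cmp C h p)) k' = cmp C k' \<beta>"
    using inv unfolding fully_invariant_def by blast
  have \<beta>_arr: "\<beta> \<in> Arr C" "src C \<beta> = src C k'" "tgt C \<beta> = src C k'"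
    using \<beta>(1) by (simp_all add: hom_def)
  have "cmp C k (cmp C v (cmp C \<beta> u)) = cmp C p (cmp C (cmp C k' \<beta>) u)"
    using comp_reassoc[OF kv] k k' arr \<beta>_arr tgt by simp
  also have "\<dots> = cmp C p (cmp C i (cmp C h (cmp C p (cmp C k' u))))"
    unfolding \<beta>(2)[symmetric] using k' arr tgt by simp
  also have "\<dots> = cmp C h k"
    using comp_reassoc[OF pi] ku k arr tgt A by simp
  finally have "cmp C h k = cmp C k (cmp C v (cmp C \<beta> u))" by (rule sym)
  moreover have "cmp C v (cmp C \<beta> u) \<in> hom C (src C k) (src C k)"
    using arr \<beta>_arr by (simp add: hom_def)
  ultimately show "\<exists>\<alpha> \<in> hom C (src C k) (src C k). cmp C h k = cmp C k \<alpha>"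
    by blast
qed

lemma strongly_rickart_retract:
  assumes kernels: "\<forall>f \<in> Arr C. \<exists>k. is_kernel C f k"
    and M': "is_retract C M' M" and N': "is_retract C N' N"
    and rickart: "strongly_rickart C M N"
  shows "strongly_rickart C M' N'"
  unfolding strongly_rickart_def
proof (intro ballI allI impI)
  fix f k assume f: "f \<in> hom C M' N'" and ker: "is_kernel C f k"
  obtain i p where i: "i \<in> hom C M' M" and p: "p \<in> hom C M M'" and pi: "cmp C p i = idm C M'"
    using M' unfolding is_retract_def by blast
  obtain j q where j: "j \<in> hom C N' N" and q: "q \<in> hom C N N'" and qj: "cmp C q j = idm C N'"
    using N' unfolding is_retract_def by blast
  have g: "cmp C j (cmp C f p) \<in> hom C M N"
    using i p j f by (simp add: hom_def)
  then obtain k' where ker': "is_kernel C (cmp C j (cmp C f p)) k'"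
    using kernels unfolding hom_def by blast
  have "fully_invariant C k'" "is_section C k'"
    using rickart g ker' unfolding strongly_rickart_def by blast+
  moreover obtain u v where "u \<in> hom C (src C k) (src C k')" "v \<in> hom C (src C k') (src C k)"
    "cmp C k' u = cmp C i k" "cmp C k v = cmp C p k'" "cmp C v u = idm C (src C k)"
    using kernel_comparison[OF i p pi j q qj f ker ker'] .
  moreover have "tgt C k = M'" "tgt C k' = M" "k \<in> Arr C"
    using kernelD[OF ker] kernelD[OF ker'] f i j p by (simp_all add: hom_def)
  ultimately show "fully_invariant C k \<and> is_section C k"
    using fully_invariant_restrict[OF _ kernel_mono[OF ker] i p pi] is_section_restrict i
    by (auto simp: hom_def)
qed

end

definition opposite :: "('o, 'm) acat \<Rightarrow> ('o, 'm) acat" where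
  "opposite C = C\<lparr>src := tgt C, tgt := src C, cmp := (\<lambda>g f. cmp C f g), zro := (\<lambda>a b. zro C b a)\<rparr>"

lemma opposite_simps [simp]:
  "Obj (opposite C) = Obj C" "Arr (opposite C) = Arr C" "idm (opposite C) = idm C"
  "src (opposite C) = tgt C" "tgt (opposite C) = src C"
  "cmp (opposite C) g f = cmp C f g" "zro (opposite C) a b = zro C b a"
  by (simp_all add: opposite_def)

lemma hom_opposite [simp]: "hom (opposite C) a b = hom C b a"
  by (auto simp: hom_def)

lemma category_opposite: "category C \<Longrightarrow> category (opposite C)"
  unfolding category_def by (simp add: Ball_def)

lemma zero_morphisms_opposite: "zero_morphisms C \<Longrightarrow> zero_morphisms (opposite C)"
  unfolding zero_morphisms_def by (simp add: category_opposite)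

lemma is_kernel_opposite: "is_kernel (opposite C) f k \<longleftrightarrow> is_cokernel C f k"
  unfolding is_kernel_def is_cokernel_def by auto

lemma mono_opposite: "mono (opposite C) f \<longleftrightarrow> epi C f"
  unfolding mono_def epi_def by auto

lemma fully_invariant_opposite: "fully_invariant (opposite C) k \<longleftrightarrow> fully_coinvariant C k"
  unfolding fully_invariant_def fully_coinvariant_def mono_opposite by auto

lemma is_section_opposite: "is_section (opposite C) f \<longleftrightarrow> is_retraction C f"
  unfolding is_section_def is_retraction_def by auto

lemma strongly_rickart_opposite:
  "strongly_rickart (opposite C) N M \<longleftrightarrow> dual_strongly_rickart C M N"
  unfolding strongly_rickart_def dual_strongly_rickart_def
  by (simp add: is_kernel_opposite fully_invariant_opposite is_section_opposite)

lemma is_retract_opposite: "is_retract (opposite C) A B \<longleftrightarrow> is_retract C A B"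
  unfolding is_retract_def by auto

theorem corollary2p18:
  fixes C :: "('o, 'm) acat" and M N M' N' :: 'o
  assumes "abelian C"
    and "M \<in> Obj C" and "N \<in> Obj C"
    and "direct_summand C M' M" and "direct_summand C N' N"
  shows "(strongly_rickart C M N \<longrightarrow> strongly_rickart C M' N') \<and>
         (dual_strongly_rickart C M N \<longrightarrow> dual_strongly_rickart C M' N')"
proof -
  have pre: "preadditive C" and kernels: "\<forall>f \<in> Arr C. \<exists>k. is_kernel C f k"
    and cokernels: "\<forall>f \<in> Arr C. \<exists>c. is_cokernel C f c"
    using assms(1) unfolding abelian_def by simp_all
  interpret zero_morphism_category C
    using preadditive_zero_morphisms[OF pre] by unfold_locales
  interpret op: zero_morphism_category "opposite C"
    using zero_morphisms_opposite[OF preadditive_zero_morphisms[OF pre]] by unfold_locales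
  have op_kernels: "\<forall>f \<in> Arr (opposite C). \<exists>k. is_kernel (opposite C) f k"
    using cokernels by (simp add: is_kernel_opposite)
  have M': "is_retract C M' M" and N': "is_retract C N' N"
    using assms(4,5) by (simp_all add: direct_summand_is_retract)
  show ?thesis
  proof (intro conjI impI)
    show "strongly_rickart C M' N'" if "strongly_rickart C M N"
      using strongly_rickart_retract[OF kernels M' N' that] .
    show "dual_strongly_rickart C M' N'" if "dual_strongly_rickart C M N"
      using op.strongly_rickart_retract[OF op_kernels] M' N' that
      by (simp add: is_retract_opposite strongly_rickart_opposite)
  qed
qed

end
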